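(* Consider the parallel multiple access channel power allocation game and the replicator dynamics described in the context. Let $p(0)=(p_1(0),\dots,p_K(0))\in\Delta$ be an initial power profile and let $\mathcal{A}_k=\mathrm{supp}(p_k(0))\subseteq\mathcal{A}$. Let $\mathfrak{G}^0$ be the reduced game played over $\Delta^0=\prod_k P_k\Delta(\mathcal{A}_k)$ (user $k$ allocates total power $P_k$ only among the nodes in $\mathcal{A}_k$) with payoffs $u_k^0(p)=\sum_{\alpha\in\mathcal{A}_k} b_\alpha\log\bigl(1+\frac{g_{k\alpha}p_{k\alpha}}{\sigma_\alpha^2+\sum_{\ell\neq k}g_{\ell\alpha}p_{\ell\alpha}}\bigr)$. Then the solution of the replicator dynamics starting at $p(0)$ converges to the (almost surely unique) Nash equilibrium of the reduced game $\mathfrak{G}^0$.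
   Context: Setting: users $\mathcal{K}=\{1,\dots,K\}$, nodes $\mathcal{A}=\{1,\dots,A\}$. User $k$ has maximum power $P_k>0$ and strategy set $\Delta_k=\{p_k\in\mathbb{R}^{\mathcal{A}}: p_{k\alpha}\ge 0,\ \sum_\alpha p_{k\alpha}=P_k\}$; $\Delta=\prod_k\Delta_k$. Payoffs of the full game: $u_k(p)=\sum_{\alpha\in\mathcal{A}} b_\alpha\log\bigl(1+\frac{g_{k\alpha}p_{k\alpha}}{\sigma_\alpha^2+\sum_{\ell\neq k}g_{\ell\alpha}p_{\ell\alpha}}\bigr)$ with constants $b_\alpha>0$, $\sigma_\alpha^2>0$ and channel gains $g_{k\alpha}>0$ drawn from a continuous (nonatomic) probability distribution on the positive reals. For a finite set $S$, $P_k\Delta(S)$ denotes $\{x\in\mathbb{R}^S: x_\alpha\ge0,\ \sum_\alpha x_\alpha=P_k\}$. $\mathrm{supp}(p_k)=\{\alpha:p_{k\alpha}>0\}$. A Nash equilibrium of a game is a profile from which no user can increase his payoff by a unilateral deviation within his strategy set. Define $v_{k\alpha}(p)=\frac{b_\alpha g_{k\alpha}}{\sigma_\alpha^2+\sum_{\ell}g_{\ell\alpha}p_{\ell\alpha}}$ and $v_k(p)=P_k^{-1}\sum_\beta p_{k\beta}v_{k\beta}(p)$. The replicator dynamics are $\frac{dp_{k\alpha}}{dt}=p_{k\alpha}\bigl(v_{k\alpha}(p(t))-v_k(p(t))\bigr)$. *)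

theory Defs
  imports "HOL-Probability.Probability"
begin

text \<open>A power profile is p :: 'k => 'n => real, p k a = power of user k on node a.
  Channel gains are g :: 'k * 'n => real; noise variances sigma2 a (= sigma_a squared).\<close>

definition strat_space :: "('k \<Rightarrow> real) \<Rightarrow> ('k::finite \<Rightarrow> 'n::finite \<Rightarrow> real) set" where
  "strat_space P = {p. \<forall>k. (\<forall>a. p k a \<ge> 0) \<and> (\<Sum>a\<in>UNIV. p k a) = P k}"

definition red_strat_space ::
  "('k \<Rightarrow> real) \<Rightarrow> ('k \<Rightarrow> 'n set) \<Rightarrow> ('k::finite \<Rightarrow> 'n::finite \<Rightarrow> real) set" where
  "red_strat_space P S = {p. \<forall>k. (\<forall>a. p k a \<ge> 0) \<and> (\<forall>a. a \<notin> S k \<longrightarrow> p k a = 0)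
                                  \<and> (\<Sum>a\<in>S k. p k a) = P k}"

definition supp_vec :: "('n \<Rightarrow> real) \<Rightarrow> 'n set" where
  "supp_vec x = {a. x a > 0}"

definition red_payoff ::
  "('n \<Rightarrow> real) \<Rightarrow> ('n \<Rightarrow> real) \<Rightarrow> ('k \<times> 'n \<Rightarrow> real) \<Rightarrow> ('k \<Rightarrow> 'n set)
   \<Rightarrow> 'k \<Rightarrow> ('k::finite \<Rightarrow> 'n::finite \<Rightarrow> real) \<Rightarrow> real" where
  "red_payoff b sigma2 g S k p =
     (\<Sum>a\<in>S k. b a * ln (1 + g (k, a) * p k a /
                           (sigma2 a + (\<Sum>l\<in>UNIV - {k}. g (l, a) * p l a))))"

definition is_nash :: "('k \<Rightarrow> 'x) set \<Rightarrow> ('k \<Rightarrow> ('k \<Rightarrow> 'x) \<Rightarrow> real) \<Rightarrow> ('k \<Rightarrow> 'x) \<Rightarrow> bool" where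
  "is_nash X u q \<longleftrightarrow> q \<in> X \<and> (\<forall>k y. q(k := y) \<in> X \<longrightarrow> u k (q(k := y)) \<le> u k q)"

definition vel :: "('n \<Rightarrow> real) \<Rightarrow> ('n \<Rightarrow> real) \<Rightarrow> ('k \<times> 'n \<Rightarrow> real)
   \<Rightarrow> ('k::finite \<Rightarrow> 'n::finite \<Rightarrow> real) \<Rightarrow> 'k \<Rightarrow> 'n \<Rightarrow> real" where
  "vel b sigma2 g p k a = b a * g (k, a) / (sigma2 a + (\<Sum>l\<in>UNIV. g (l, a) * p l a))"

definition avg_vel :: "('k \<Rightarrow> real) \<Rightarrow> ('n \<Rightarrow> real) \<Rightarrow> ('n \<Rightarrow> real) \<Rightarrow> ('k \<times> 'n \<Rightarrow> real)
   \<Rightarrow> ('k::finite \<Rightarrow> 'n::finite \<Rightarrow> real) \<Rightarrow> 'k \<Rightarrow> real" where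
  "avg_vel P b sigma2 g p k = (\<Sum>a\<in>UNIV. p k a * vel b sigma2 g p k a) / P k"

definition replicator_solution :: "('k \<Rightarrow> real) \<Rightarrow> ('n \<Rightarrow> real) \<Rightarrow> ('n \<Rightarrow> real)
   \<Rightarrow> ('k \<times> 'n \<Rightarrow> real) \<Rightarrow> (real \<Rightarrow> 'k::finite \<Rightarrow> 'n::finite \<Rightarrow> real) \<Rightarrow> bool" where
  "replicator_solution P b sigma2 g p \<longleftrightarrow>
     (\<forall>t\<ge>0. \<forall>k a. ((\<lambda>s. p s k a) has_real_derivative
         (p t k a * (vel b sigma2 g (p t) k a - avg_vel P b sigma2 g (p t) k)))
         (at t within {0..}))"

end

theory Submission
  imports Defs
begin

text \<open>The reduced game is an exact potential game whose potential
  \<open>\<Sum>a. b a * ln (sigma2 a + \<Sum>k. g (k, a) * p k a)\<close> is concave on the compact strategy space, so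
  a maximizer exists and is an equilibrium. Any two equilibria induce the same loads, hence differ
  only by a circulation on whose support the gains factor as \<open>g (k, a) = \<lambda> k * \<mu> a\<close>; this is
  a null event, so almost surely the equilibrium is unique. Along a replicator trajectory the supports
  and total powers are preserved and the potential is nondecreasing, while the log-likelihood
  \<open>\<Sum>k a. q k a * ln (p t k a)\<close> of the equilibrium \<open>q\<close> grows at rate at least
  \<open>potential q - potential (p t)\<close> and stays bounded. Hence the potential along the trajectory
  approaches its maximum, and by compactness and uniqueness \<open>p t\<close> converges to \<open>q\<close>.\<close>

section \<open>Genericity of the channel gains\<close>

lemma AE_sum_mult_ln_update_neq_0:
  fixes mu :: "real measure" and c :: "'e::finite \<Rightarrow> real"
  assumes borel: "sets mu = sets borel" and nonatomic: "\<forall>x. emeasure mu {x} = 0"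
    and positive: "AE y in mu. y > 0" and c0: "c e0 \<noteq> 0"
  shows "AE y in mu. (\<Sum>e\<in>UNIV. c e * ln ((x(e0 := y)) e)) \<noteq> 0"
proof -
  define r where "r = - (\<Sum>e\<in>UNIV - {e0}. c e * ln (x e)) / c e0"
  have "{exp r} \<in> null_sets mu"
    using nonatomic borel by (auto simp: null_sets_def)
  hence "AE y in mu. y \<noteq> exp r" using AE_not_in by force
  thus ?thesis using positive
  proof eventually_elim
    case (elim y)
    have UNIV_eq: "(UNIV::'e set) = insert e0 (UNIV - {e0})" by auto
    have "(\<Sum>e\<in>UNIV. c e * ln ((x(e0 := y)) e)) = c e0 * ln y + (\<Sum>e\<in>UNIV - {e0}. c e * ln (x e))"
      by (subst UNIV_eq, subst sum.insert) auto
    also have "\<dots> = c e0 * (ln y - r)" using c0 by (simp add: r_def field_simps)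
    also have "\<dots> \<noteq> 0"
      using elim c0 by (metis divisors_zero eq_iff_diff_eq_0 exp_ln)
    finally show ?case .
  qed
qed

text \<open>By Fubini, since each section of the zero set in the direction of \<open>e0\<close> is null.\<close>
lemma AE_sum_mult_ln_neq_0:
  fixes mu :: "real measure" and c :: "'e::finite \<Rightarrow> real"
  assumes prob: "prob_space mu"
    and borel: "sets mu = sets borel"
    and nonatomic: "\<forall>x. emeasure mu {x} = 0"
    and positive: "AE x in mu. x > 0"
    and c0: "c e0 \<noteq> 0"
  shows "AE g in PiM UNIV (\<lambda>_::'e. mu). (\<Sum>e\<in>UNIV. c e * ln (g e)) \<noteq> 0"
proof -
  interpret product_sigma_finite "\<lambda>_::'e. mu"
    unfolding product_sigma_finite_def using prob prob_space_imp_sigma_finite by blast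
  have [measurable_cong]: "sets mu = sets borel" by (rule borel)
  define N where "N = {g \<in> space (PiM UNIV (\<lambda>_::'e. mu)). (\<Sum>e\<in>UNIV. c e * ln (g e)) = 0}"
  have N: "N \<in> sets (PiM UNIV (\<lambda>_::'e. mu))"
    unfolding N_def by measurable
  have UNIV_eq: "(UNIV::'e set) = insert e0 (UNIV - {e0})" by auto
  have section_null: "(\<integral>\<^sup>+ y. indicator N (x(e0 := y)) \<partial>mu) = 0" for x :: "'e \<Rightarrow> real"
  proof -
    have "AE y in mu. indicator N (x(e0 := y)) = (0::ennreal)"
      using AE_sum_mult_ln_update_neq_0[of mu c e0 x, OF borel nonatomic positive c0]
      by eventually_elim (simp add: N_def)
    hence "(\<integral>\<^sup>+ y. indicator N (x(e0 := y)) \<partial>mu) = (\<integral>\<^sup>+ y. 0 \<partial>mu)"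
      by (rule nn_integral_cong_AE)
    thus ?thesis by simp
  qed
  have "emeasure (PiM UNIV (\<lambda>_::'e. mu)) N
      = (\<integral>\<^sup>+ g. indicator N g \<partial>PiM (insert e0 (UNIV - {e0})) (\<lambda>_::'e. mu))"
    using N UNIV_eq[symmetric] by simp
  also have "\<dots> = (\<integral>\<^sup>+ x. (\<integral>\<^sup>+ y. indicator N (x(e0 := y)) \<partial>mu) \<partial>PiM (UNIV - {e0}) (\<lambda>_::'e. mu))"
    by (rule product_nn_integral_insert) (use N UNIV_eq in auto)
  also have "\<dots> = 0" by (simp add: section_null)
  finally have "AE g in PiM UNIV (\<lambda>_::'e. mu). g \<notin> N"
    using N by (intro AE_not_in) auto
  moreover have "space mu = UNIV" using sets_eq_imp_space_eq[OF borel] by simp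
  ultimately show ?thesis by (auto simp: N_def space_PiM elim!: eventually_mono)
qed

definition circulation :: "('k::finite \<times> 'n::finite \<Rightarrow> real) \<Rightarrow> bool" where
  "circulation c \<longleftrightarrow> (\<forall>k. (\<Sum>a\<in>UNIV. c (k, a)) = 0) \<and> (\<forall>a. (\<Sum>k\<in>UNIV. c (k, a)) = 0)"

definition circulation_on :: "('k::finite \<times> 'n::finite) set \<Rightarrow> ('k \<times> 'n \<Rightarrow> real) \<Rightarrow> bool" where
  "circulation_on E c \<longleftrightarrow> circulation c \<and> {e. c e \<noteq> 0} \<subseteq> E"

definition generic_gains :: "('k::finite \<times> 'n::finite \<Rightarrow> real) \<Rightarrow> bool" where
  "generic_gains g \<longleftrightarrow>
     (\<forall>E. (\<exists>c. circulation_on E c \<and> (\<exists>e. c e \<noteq> 0)) \<longrightarrow>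
          (\<exists>c. circulation_on E c \<and> (\<Sum>e\<in>UNIV. c e * ln (g e)) \<noteq> 0))"

lemma circulation_sum_ln_factorized:
  fixes c :: "'k::finite \<times> 'n::finite \<Rightarrow> real"
  assumes "circulation c" and factor: "\<And>k a. c (k, a) \<noteq> 0 \<Longrightarrow> g (k, a) = lam k * mu a"
    and "\<And>k. lam k > 0" and "\<And>a. mu a > 0"
  shows "(\<Sum>e\<in>UNIV. c e * ln (g e)) = 0"
proof -
  have "(\<Sum>e\<in>UNIV. c e * ln (g e)) = (\<Sum>e\<in>UNIV. c e * ln (lam (fst e)) + c e * ln (mu (snd e)))"
  proof (rule sum.cong)
    fix e :: "'k \<times> 'n"
    obtain k a where e: "e = (k, a)" by (cases e)
    show "c e * ln (g e) = c e * ln (lam (fst e)) + c e * ln (mu (snd e))"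
      using factor[of k a] assms(3)[of k] assms(4)[of a]
      by (cases "c e = 0") (auto simp: e ln_mult algebra_simps)
  qed simp
  also have "\<dots> = (\<Sum>k\<in>UNIV. ln (lam k) * (\<Sum>a\<in>UNIV. c (k, a)))
                  + (\<Sum>a\<in>UNIV. ln (mu a) * (\<Sum>k\<in>UNIV. c (k, a)))"
  proof -
    have pairs: "(\<Sum>e\<in>UNIV. f e) = (\<Sum>k\<in>UNIV. \<Sum>a\<in>UNIV. f (k, a))" for f :: "'k \<times> 'n \<Rightarrow> real"
      by (subst sum.cartesian_product) (simp add: UNIV_Times_UNIV[symmetric] del: UNIV_Times_UNIV)
    have "(\<Sum>e\<in>UNIV. c e * ln (mu (snd e))) = (\<Sum>k\<in>UNIV. \<Sum>a\<in>UNIV. ln (mu a) * c (k, a))"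
      by (simp add: pairs mult.commute)
    also have "\<dots> = (\<Sum>a\<in>UNIV. ln (mu a) * (\<Sum>k\<in>UNIV. c (k, a)))"
      by (subst sum.swap) (simp add: sum_distrib_left)
    finally show ?thesis
      by (simp add: sum.distrib pairs sum_distrib_left mult.commute)
  qed
  also have "\<dots> = 0" using assms(1) by (simp add: circulation_def)
  finally show ?thesis .
qed

lemma AE_generic_gains:
  fixes mu :: "real measure"
  assumes "prob_space mu" "sets mu = sets borel" "\<forall>x. emeasure mu {x} = 0" "AE x in mu. x > 0"
  shows "AE g in PiM UNIV (\<lambda>_::'k::finite \<times> 'n::finite. mu). generic_gains g"
  unfolding generic_gains_def
proof (rule eventually_all_finite)
  fix E :: "('k \<times> 'n) set"
  show "AE g in PiM UNIV (\<lambda>_. mu). (\<exists>c. circulation_on E c \<and> (\<exists>e. c e \<noteq> 0)) \<longrightarrow>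
          (\<exists>c. circulation_on E c \<and> (\<Sum>e\<in>UNIV. c e * ln (g e)) \<noteq> 0)"
  proof (cases "\<exists>c. circulation_on E c \<and> (\<exists>e. c e \<noteq> 0)")
    case True
    then obtain c e0 where "circulation_on E c" "c e0 \<noteq> 0" by auto
    from AE_sum_mult_ln_neq_0[OF assms, of c e0] \<open>c e0 \<noteq> 0\<close>
    have "AE g in PiM UNIV (\<lambda>_. mu). (\<Sum>e\<in>UNIV. c e * ln (g e)) \<noteq> 0" by simp
    thus ?thesis by eventually_elim (use \<open>circulation_on E c\<close> in blast)
  next
    case False
    thus ?thesis by (intro always_eventually) blast
  qed
qed

lemma AE_PiM_all_pos:
  fixes mu :: "real measure"
  assumes "prob_space mu" "AE x in mu. x > 0"
  shows "AE g in PiM UNIV (\<lambda>_::'e::finite. mu). \<forall>e. g e > 0"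
proof (rule eventually_all_finite)
  fix e :: 'e
  show "AE g in PiM UNIV (\<lambda>_. mu). g e > 0"
    by (rule AE_PiM_component[where P = "\<lambda>x. x > 0"]) (use assms in auto)
qed

section \<open>Reduced strategy spaces\<close>

lemma compact_PiE_UNIV:
  assumes "\<And>i. compact (C i)"
  shows "compact (PiE UNIV C :: ('a \<Rightarrow> 'b::topological_space) set)"
  using assms compactin_PiE[of "\<lambda>_. euclidean" UNIV C]
  by (simp add: euclidean_product_topology)

lemma red_strat_space_nonneg: "x \<in> red_strat_space P S \<Longrightarrow> x k a \<ge> 0"
  by (simp add: red_strat_space_def)

lemma red_strat_space_outside: "x \<in> red_strat_space P S \<Longrightarrow> a \<notin> S k \<Longrightarrow> x k a = 0"
  by (simp add: red_strat_space_def)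

lemma red_strat_space_support: "x \<in> red_strat_space P S \<Longrightarrow> x k a > 0 \<Longrightarrow> a \<in> S k"
  by (cases "a \<in> S k") (auto dest: red_strat_space_outside)

lemma red_strat_space_sum:
  assumes "x \<in> red_strat_space P S" shows "sum (x k) UNIV = P k"
proof -
  have "sum (x k) UNIV = sum (x k) (S k)"
    using assms by (intro sum.mono_neutral_right) (auto simp: red_strat_space_def)
  thus ?thesis using assms by (simp add: red_strat_space_def)
qed

lemma red_strat_space_le:
  assumes x: "x \<in> red_strat_space P S" shows "x k a \<le> P k"
proof -
  have "x k a \<le> sum (x k) UNIV"
    by (rule member_le_sum) (auto intro: red_strat_space_nonneg[OF x])
  thus ?thesis using red_strat_space_sum[OF x] by simp
qed

lemma red_strat_space_ex_pos:
  assumes x: "x \<in> red_strat_space P S" and "P k > 0"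
  obtains a where "x k a > 0"
proof -
  have "\<exists>a. x k a > 0"
  proof (rule ccontr)
    assume "\<not> ?thesis"
    hence "x k a = 0" for a using red_strat_space_nonneg[OF x, of k a] by (meson not_le order_antisym)
    thus False using red_strat_space_sum[OF x, of k] \<open>P k > 0\<close> by simp
  qed
  thus thesis using that by blast
qed

lemma continuous_on_apply2 [continuous_intros]:
  "continuous_on A (\<lambda>x :: 'a \<Rightarrow> 'b \<Rightarrow> real. x k a)"
  by (rule continuous_on_product_then_coordinatewise[OF
        continuous_on_product_then_coordinatewise[OF continuous_on_id]])

lemma closed_red_strat_space: "closed (red_strat_space P (S :: 'k::finite \<Rightarrow> 'n::finite set))"
proof -
  have outside: "continuous_on UNIV (\<lambda>x::'k \<Rightarrow> 'n \<Rightarrow> real. if a \<in> S k then 0 else x k a)" for k a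
    by (cases "a \<in> S k") (auto intro!: continuous_intros)
  have "red_strat_space P S =
      {x. \<forall>k. (\<forall>a. 0 \<le> x k a) \<and> (\<forall>a. (if a \<in> S k then 0 else x k a) = 0) \<and> (\<Sum>a\<in>S k. x k a) = P k}"
    by (auto simp: red_strat_space_def split: if_splits)
  also have "closed \<dots>"
    by (intro closed_Collect_all closed_Collect_conj closed_Collect_le closed_Collect_eq outside)
       (auto intro!: continuous_intros)
  finally show ?thesis .
qed

lemma compact_red_strat_space: "compact (red_strat_space P (S :: 'k::finite \<Rightarrow> 'n::finite set))"
proof -
  let ?B = "PiE UNIV (\<lambda>k. PiE UNIV (\<lambda>a. {0..P k})) :: ('k \<Rightarrow> 'n \<Rightarrow> real) set"
  have "red_strat_space P S \<subseteq> ?B"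
  proof
    fix x assume "x \<in> red_strat_space P S"
    thus "x \<in> ?B" using red_strat_space_nonneg red_strat_space_le by auto
  qed
  moreover have "compact (?B \<inter> red_strat_space P S)"
    by (intro compact_Int_closed compact_PiE_UNIV closed_red_strat_space compact_Icc)
  ultimately show ?thesis by (simp add: Int_absorb1)
qed

lemma red_strat_space_nonempty:
  assumes "\<And>k. S k \<noteq> {}" "\<And>k. P k \<ge> 0"
  shows "red_strat_space P S \<noteq> {}"
proof -
  define a0 where "a0 k = (SOME a. a \<in> S k)" for k
  have "a0 k \<in> S k" for k unfolding a0_def using assms(1) by (simp add: some_in_eq)
  hence "(\<lambda>k a. if a = a0 k then P k else 0) \<in> red_strat_space P S"
    using assms(2) by (auto simp: red_strat_space_def)
  thus ?thesis by blast
qed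

lemma red_strat_space_transfer:
  assumes x: "x \<in> red_strat_space P S" and "a \<in> S k" "\<beta> \<in> S k" "\<beta> \<noteq> a"
    and "0 \<le> h" "h \<le> x k a"
  shows "x(k := (x k)(\<beta> := x k \<beta> + h, a := x k a - h)) \<in> red_strat_space P S"
proof -
  let ?y = "(x k)(\<beta> := x k \<beta> + h, a := x k a - h)"
  have "?y c = x k c + ((if c = \<beta> then h else 0) - (if c = a then h else 0))" for c
    using \<open>\<beta> \<noteq> a\<close> by auto
  hence "sum ?y (S k) = sum (x k) (S k)"
    using assms(2,3) by (simp add: sum.distrib sum_subtractf)
  thus ?thesis
    using x assms(2-6) red_strat_space_nonneg[OF x, of k \<beta>] by (auto simp: red_strat_space_def)
qed

section \<open>The reduced game as a potential game\<close>

locale mac_game =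
  fixes P :: "'k::finite \<Rightarrow> real" and b sigma2 :: "'n::finite \<Rightarrow> real" and g :: "'k \<times> 'n \<Rightarrow> real"
  assumes P_pos: "\<And>k. P k > 0" and b_pos: "\<And>a. b a > 0" and sigma2_pos: "\<And>a. sigma2 a > 0"
    and g_pos: "\<And>e. g e > 0"
begin

abbreviation nash :: "('k \<Rightarrow> 'n set) \<Rightarrow> ('k \<Rightarrow> 'n \<Rightarrow> real) \<Rightarrow> bool" where
  "nash S \<equiv> is_nash (red_strat_space P S) (red_payoff b sigma2 g S)"

definition load :: "('k \<Rightarrow> 'n \<Rightarrow> real) \<Rightarrow> 'n \<Rightarrow> real" where
  "load x a = sigma2 a + (\<Sum>l\<in>UNIV. g (l, a) * x l a)"

text \<open>The reduced game is an exact potential game with this potential.\<close>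
definition potential :: "('k \<Rightarrow> 'n \<Rightarrow> real) \<Rightarrow> real" where
  "potential x = (\<Sum>a\<in>UNIV. b a * ln (load x a))"

lemma load_ge_sigma2: "(\<And>l. x l a \<ge> 0) \<Longrightarrow> load x a \<ge> sigma2 a"
  unfolding load_def
  by (smt (verit) sum_nonneg mult_nonneg_nonneg less_imp_le[OF g_pos])

lemma load_pos: "(\<And>l. x l a \<ge> 0) \<Longrightarrow> load x a > 0"
  using load_ge_sigma2 sigma2_pos by (meson less_le_trans)

lemma load_red_pos: "x \<in> red_strat_space P S \<Longrightarrow> load x a > 0"
  by (rule load_pos) (rule red_strat_space_nonneg)

lemma vel_eq: "vel b sigma2 g x k a = b a * g (k, a) / load x a"
  by (simp add: vel_def load_def)

lemma load_update: "load (x(k := y)) a = load x a + g (k, a) * (y a - x k a)"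
  unfolding load_def
  by (simp add: sum.remove[of UNIV k] algebra_simps)

lemma sum_mult_vel_eq_load:
  "(\<Sum>k\<in>UNIV. \<Sum>a\<in>UNIV. y k a * vel b sigma2 g x k a)
     = (\<Sum>a\<in>UNIV. b a / load x a * (load y a - sigma2 a))"
  unfolding load_def vel_eq
  by (subst sum.swap) (simp add: sum_distrib_left sum_divide_distrib algebra_simps)

lemma sum_mult_vel_eq_avg_vel:
  "(\<Sum>a\<in>UNIV. x k a * vel b sigma2 g x k a) = P k * avg_vel P b sigma2 g x k"
  using P_pos[of k] by (simp add: avg_vel_def)

lemma payoff_term_eq:
  assumes "\<And>l. x l a \<ge> 0"
  shows "ln (1 + g (k, a) * x k a / (sigma2 a + (\<Sum>l\<in>UNIV - {k}. g (l, a) * x l a)))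
         = ln (load x a) - ln (sigma2 a + (\<Sum>l\<in>UNIV - {k}. g (l, a) * x l a))"
proof -
  define W where "W = sigma2 a + (\<Sum>l\<in>UNIV - {k}. g (l, a) * x l a)"
  have W: "W > 0" unfolding W_def using sigma2_pos[of a] g_pos assms
    by (smt (verit) mult_nonneg_nonneg sum_nonneg)
  have "load x a = W + g (k, a) * x k a"
    unfolding load_def W_def by (simp add: sum.remove[of UNIV k])
  hence "1 + g (k, a) * x k a / W = load x a / W" using W by (simp add: field_simps)
  thus ?thesis using W load_pos[of x a, OF assms] by (simp add: W_def[symmetric] ln_div)
qed

lemma red_payoff_eq_load:
  assumes z: "z \<in> red_strat_space P S" and others: "\<And>l a. l \<noteq> k \<Longrightarrow> z l a = x l a"
  shows "red_payoff b sigma2 g S k z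
       = (\<Sum>a\<in>S k. b a * (ln (load z a) - ln (sigma2 a + (\<Sum>l\<in>UNIV - {k}. g (l, a) * x l a))))"
  unfolding red_payoff_def
proof (rule sum.cong[OF refl])
  fix a
  have "(\<Sum>l\<in>UNIV - {k}. g (l, a) * z l a) = (\<Sum>l\<in>UNIV - {k}. g (l, a) * x l a)"
    using others by (intro sum.cong) auto
  thus "b a * ln (1 + g (k, a) * z k a / (sigma2 a + (\<Sum>l\<in>UNIV - {k}. g (l, a) * z l a)))
      = b a * (ln (load z a) - ln (sigma2 a + (\<Sum>l\<in>UNIV - {k}. g (l, a) * x l a)))"
    using payoff_term_eq[of z a k] red_strat_space_nonneg[OF z] by simp
qed

lemma red_payoff_update_eq_potential:
  assumes x: "x \<in> red_strat_space P S" and x': "x(k := y) \<in> red_strat_space P S"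
  shows "red_payoff b sigma2 g S k (x(k := y)) - red_payoff b sigma2 g S k x
       = potential (x(k := y)) - potential x"
proof -
  let ?x' = "x(k := y)"
  have "red_payoff b sigma2 g S k ?x' - red_payoff b sigma2 g S k x
      = (\<Sum>a\<in>S k. b a * (ln (load ?x' a) - ln (load x a)))"
    by (simp add: red_payoff_eq_load[OF x] red_payoff_eq_load[OF x', of k x]
                  sum_subtractf[symmetric] algebra_simps)
  also have "\<dots> = (\<Sum>a\<in>UNIV. b a * (ln (load ?x' a) - ln (load x a)))"
  proof (rule sum.mono_neutral_left)
    have "y a = 0" "x k a = 0" if "a \<notin> S k" for a
      using red_strat_space_outside[OF x', of a k] red_strat_space_outside[OF x, of a k] that by auto
    thus "\<forall>a\<in>UNIV - S k. b a * (ln (load ?x' a) - ln (load x a)) = 0"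
      by (simp add: load_update)
  qed auto
  also have "\<dots> = potential ?x' - potential x"
    unfolding potential_def by (simp add: sum_subtractf[symmetric] algebra_simps)
  finally show ?thesis .
qed

lemma nash_iff_potential:
  "nash S q \<longleftrightarrow> q \<in> red_strat_space P S \<and>
     (\<forall>k y. q(k := y) \<in> red_strat_space P S \<longrightarrow> potential (q(k := y)) \<le> potential q)"
  unfolding is_nash_def using red_payoff_update_eq_potential by (smt (verit))

lemma potential_maximizer_nash:
  assumes "q \<in> red_strat_space P S" "\<forall>x\<in>red_strat_space P S. potential x \<le> potential q"
  shows "nash S q"
  using assms by (simp add: nash_iff_potential)

lemma continuous_on_potential: "continuous_on (red_strat_space P S) potential"
  unfolding potential_def
proof (intro continuous_intros ballI)
  show "load x a \<noteq> 0" if "x \<in> red_strat_space P S" for x a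
    using load_red_pos[OF that, of a] by simp
qed (simp add: load_def, intro continuous_intros)

lemma ex_potential_maximizer:
  assumes "\<And>k. S k \<noteq> {}"
  shows "\<exists>q\<in>red_strat_space P S. \<forall>x\<in>red_strat_space P S. potential x \<le> potential q"
  by (rule continuous_attains_sup[OF compact_red_strat_space
        red_strat_space_nonempty[OF assms less_imp_le[OF P_pos]] continuous_on_potential])

text \<open>Shifting power \<open>h\<close> from node \<open>a\<close> to node \<open>\<beta>\<close> changes the potential at rate
  \<open>vel \<beta> - vel a\<close>; at an equilibrium this rate cannot be positive.\<close>
lemma nash_vel_le:
  assumes nash: "nash S q" and qa: "q k a > 0" and \<beta>: "\<beta> \<in> S k"
  shows "vel b sigma2 g q k \<beta> \<le> vel b sigma2 g q k a"
proof (rule ccontr)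
  assume "\<not> ?thesis"
  hence gt: "b \<beta> * g (k, \<beta>) / load q \<beta> - b a * g (k, a) / load q a > 0" by (simp add: vel_eq)
  have q: "q \<in> red_strat_space P S" using nash by (simp add: is_nash_def)
  have a: "a \<in> S k" by (rule red_strat_space_support[OF q qa])
  have "\<beta> \<noteq> a" using gt by auto
  have lq: "load q \<beta> > 0" "load q a > 0" using load_red_pos[OF q] by auto
  define \<phi> where "\<phi> h = b \<beta> * ln (load q \<beta> + g (k, \<beta>) * h) + b a * ln (load q a - g (k, a) * h)" for h
  have "DERIV \<phi> 0 :> b \<beta> * g (k, \<beta>) / load q \<beta> - b a * g (k, a) / load q a"
    unfolding \<phi>_def using lq by (auto intro!: derivative_eq_intros simp: field_simps)
  then obtain d where d: "d > 0" "\<And>h. 0 < h \<Longrightarrow> h < d \<Longrightarrow> \<phi> 0 < \<phi> h"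
    using DERIV_pos_inc_right[OF _ gt] by (metis add_0)
  define h where "h = min (d / 2) (q k a)"
  have h: "0 < h" "h < d" "h \<le> q k a" using d qa by (auto simp: h_def)
  define q' where "q' = q(k := (q k)(\<beta> := q k \<beta> + h, a := q k a - h))"
  have q': "q' \<in> red_strat_space P S"
    unfolding q'_def using red_strat_space_transfer[OF q a \<beta> \<open>\<beta> \<noteq> a\<close>] h by simp
  have "potential q' - potential q = (\<Sum>c\<in>{\<beta>, a}. b c * (ln (load q' c) - ln (load q c)))"
    unfolding potential_def sum_subtractf[symmetric] right_diff_distrib[symmetric]
    by (rule sum.mono_neutral_right) (auto simp: q'_def load_update)
  also have "\<dots> = \<phi> h - \<phi> 0"
    using \<open>\<beta> \<noteq> a\<close> by (simp add: q'_def load_update \<phi>_def algebra_simps)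
  also have "\<dots> > 0" using d(2)[OF h(1,2)] by simp
  finally show False using nash q' unfolding nash_iff_potential q'_def by force
qed

lemma nash_equal_vel:
  assumes nash: "nash S q"
  obtains lam where "\<And>k a. a \<in> S k \<Longrightarrow> vel b sigma2 g q k a \<le> lam k"
    "\<And>k a. q k a > 0 \<Longrightarrow> vel b sigma2 g q k a = lam k" "\<And>k. lam k > 0"
proof -
  have q: "q \<in> red_strat_space P S" using nash by (simp add: is_nash_def)
  have "\<exists>a. q k a > 0" for k using red_strat_space_ex_pos[OF q P_pos] by blast
  then obtain a0 where a0: "\<And>k. q k (a0 k) > 0" by metis
  show thesis
  proof (rule that[of "\<lambda>k. vel b sigma2 g q k (a0 k)"])
    show "a \<in> S k \<Longrightarrow> vel b sigma2 g q k a \<le> vel b sigma2 g q k (a0 k)" for k a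
      using nash_vel_le[OF nash a0] by blast
    show "vel b sigma2 g q k a = vel b sigma2 g q k (a0 k)" if "q k a > 0" for k a
      using nash_vel_le[OF nash that red_strat_space_support[OF q a0]]
        nash_vel_le[OF nash a0 red_strat_space_support[OF q that]] by simp
    show "vel b sigma2 g q k (a0 k) > 0" for k
      using b_pos g_pos load_red_pos[OF q] by (simp add: vel_eq)
  qed
qed

lemma nash_variational_ineq:
  assumes nash: "nash S q" and x: "x \<in> red_strat_space P S"
  shows "(\<Sum>k\<in>UNIV. \<Sum>a\<in>UNIV. x k a * vel b sigma2 g q k a)
       \<le> (\<Sum>k\<in>UNIV. \<Sum>a\<in>UNIV. q k a * vel b sigma2 g q k a)"
proof (rule sum_mono)
  fix k
  have q: "q \<in> red_strat_space P S" using nash by (simp add: is_nash_def)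
  obtain lam where le: "\<And>k a. a \<in> S k \<Longrightarrow> vel b sigma2 g q k a \<le> lam k"
    and eq: "\<And>k a. q k a > 0 \<Longrightarrow> vel b sigma2 g q k a = lam k" and "\<And>k. lam k > 0"
    using nash_equal_vel[OF nash] by blast
  have "(\<Sum>a\<in>UNIV. x k a * vel b sigma2 g q k a) \<le> (\<Sum>a\<in>UNIV. x k a * lam k)"
  proof (rule sum_mono)
    fix a
    show "x k a * vel b sigma2 g q k a \<le> x k a * lam k"
    proof (cases "a \<in> S k")
      case True
      thus ?thesis using le[of a k] red_strat_space_nonneg[OF x, of k a] by (simp add: mult_left_mono)
    qed (simp add: red_strat_space_outside[OF x])
  qed
  also have "\<dots> = (\<Sum>a\<in>UNIV. q k a * lam k)"
    unfolding sum_distrib_right[symmetric] red_strat_space_sum[OF x] red_strat_space_sum[OF q] ..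
  also have "\<dots> = (\<Sum>a\<in>UNIV. q k a * vel b sigma2 g q k a)"
  proof (rule sum.cong[OF refl])
    fix a
    show "q k a * lam k = q k a * vel b sigma2 g q k a"
      using eq[of k a] red_strat_space_nonneg[OF q, of k a] by (cases "q k a > 0") auto
  qed
  finally show "(\<Sum>a\<in>UNIV. x k a * vel b sigma2 g q k a) \<le> (\<Sum>a\<in>UNIV. q k a * vel b sigma2 g q k a)" .
qed

text \<open>Adding the variational inequalities of both equilibria gives
  \<open>\<Sum>a. b a * (load q' a - load q a)\<^sup>2 / (load q a * load q' a) \<le> 0\<close>.\<close>
lemma nash_load_unique:
  assumes n: "nash S q" and n': "nash S q'"
  shows "load q' = load q"
proof
  fix a0
  have q: "q \<in> red_strat_space P S" and q': "q' \<in> red_strat_space P S"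
    using n n' by (simp_all add: is_nash_def)
  define T where "T a = b a * (load q' a - load q a)\<^sup>2 / (load q a * load q' a)" for a
  have T_nonneg: "T a \<ge> 0" for a
    unfolding T_def using b_pos[of a] load_red_pos[OF q, of a] load_red_pos[OF q', of a] by simp
  have "T a = b a / load q a * (load q' a - load q a) + b a / load q' a * (load q a - load q' a)" for a
    unfolding T_def using load_red_pos[OF q, of a] load_red_pos[OF q', of a]
    by (simp add: field_simps power2_eq_square)
  hence "sum T UNIV \<le> 0"
    using nash_variational_ineq[OF n q'] nash_variational_ineq[OF n' q]
    unfolding sum_mult_vel_eq_load by (simp add: sum.distrib sum_subtractf right_diff_distrib)
  hence "T a0 = 0"
    using T_nonneg sum_nonneg_eq_0_iff[of UNIV T] by (simp add: order_antisym sum_nonneg)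
  thus "load q' a0 = load q a0"
    using b_pos[of a0] load_red_pos[OF q, of a0] load_red_pos[OF q', of a0] by (simp add: T_def)
qed

lemma nash_vel_eq_where_different:
  assumes n: "nash S q" and n': "nash S q'" and diff: "q k a \<noteq> q' k a"
    and le: "\<And>a. a \<in> S k \<Longrightarrow> vel b sigma2 g q k a \<le> lam"
    and eq: "\<And>a. q k a > 0 \<Longrightarrow> vel b sigma2 g q k a = lam"
  shows "vel b sigma2 g q k a = lam"
proof (cases "q k a > 0")
  case False
  have q: "q \<in> red_strat_space P S" and q': "q' \<in> red_strat_space P S"
    using n n' by (simp_all add: is_nash_def)
  have "q' k a > 0"
    using False diff red_strat_space_nonneg[OF q, of k a] red_strat_space_nonneg[OF q', of k a] by auto
  obtain a' where "q k a' > 0" using red_strat_space_ex_pos[OF q P_pos] .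
  have "vel b sigma2 g q' k a' \<le> vel b sigma2 g q' k a"
    by (rule nash_vel_le[OF n' \<open>q' k a > 0\<close> red_strat_space_support[OF q \<open>q k a' > 0\<close>]])
  moreover have "vel b sigma2 g q' = vel b sigma2 g q"
    using nash_load_unique[OF n n'] by (simp add: vel_eq[abs_def])
  ultimately have "lam \<le> vel b sigma2 g q k a" using eq[OF \<open>q k a' > 0\<close>] by simp
  thus ?thesis using le[OF red_strat_space_support[OF q' \<open>q' k a > 0\<close>]] by simp
qed (rule eq)

lemma circulation_weighted_difference:
  assumes q: "q \<in> red_strat_space P S" and q': "q' \<in> red_strat_space P S"
    and same_load: "load q' = load q"
    and vel: "\<And>k a. q k a \<noteq> q' k a \<Longrightarrow> vel b sigma2 g q k a = lam k"
  shows "circulation (\<lambda>(k, a). lam k * (q k a - q' k a))"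
  unfolding circulation_def
proof (intro conjI allI)
  show "(\<Sum>a\<in>UNIV. case (k, a) of (k, a) \<Rightarrow> lam k * (q k a - q' k a)) = 0" for k
    by (simp add: sum_distrib_left[symmetric] sum_subtractf
                  red_strat_space_sum[OF q] red_strat_space_sum[OF q'])
  fix a
  have "lam k * (q k a - q' k a) = b a / load q a * (g (k, a) * q k a - g (k, a) * q' k a)" for k
  proof (cases "q k a = q' k a")
    case False
    hence lam_eq: "lam k = b a * g (k, a) / load q a" using vel[of k a] by (simp add: vel_eq)
    show ?thesis unfolding lam_eq using load_red_pos[OF q, of a] by (simp add: field_simps)
  qed simp
  hence "(\<Sum>k\<in>UNIV. case (k, a) of (k, a) \<Rightarrow> lam k * (q k a - q' k a))
      = b a / load q a * (\<Sum>k\<in>UNIV. g (k, a) * q k a - g (k, a) * q' k a)"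
    by (simp add: sum_distrib_left)
  also have "\<dots> = b a / load q a * (load q a - load q' a)"
    by (simp add: load_def sum_subtractf)
  finally show "(\<Sum>k\<in>UNIV. case (k, a) of (k, a) \<Rightarrow> lam k * (q k a - q' k a)) = 0"
    using same_load by simp
qed

text \<open>Two equilibria differ by the circulation \<open>lam k * (q k a - q' k a)\<close> (with \<open>lam k\<close> the
  common marginal utility of user \<open>k\<close> at \<open>q\<close>), on whose support
  \<open>g (k, a) = lam k * (load q a / b a)\<close>; genericity excludes this unless the circulation vanishes.\<close>
lemma nash_unique:
  assumes gen: "generic_gains g" and n: "nash S q" and n': "nash S q'"
  shows "q' = q"
proof (rule ccontr)
  assume "q' \<noteq> q"
  have q: "q \<in> red_strat_space P S" and q': "q' \<in> red_strat_space P S"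
    using n n' by (simp_all add: is_nash_def)
  obtain lam where le: "\<And>k a. a \<in> S k \<Longrightarrow> vel b sigma2 g q k a \<le> lam k"
    and eq: "\<And>k a. q k a > 0 \<Longrightarrow> vel b sigma2 g q k a = lam k" and lam: "\<And>k. lam k > 0"
    using nash_equal_vel[OF n] by blast
  have vel: "vel b sigma2 g q k a = lam k" if "q k a \<noteq> q' k a" for k a
    using nash_vel_eq_where_different[OF n n' that] le eq by blast
  define c where "c = (\<lambda>(k, a). lam k * (q k a - q' k a))"
  have "circulation c"
    unfolding c_def by (rule circulation_weighted_difference[OF q q' nash_load_unique[OF n n'] vel])
  moreover have "\<exists>e. c e \<noteq> 0"
  proof -
    obtain k a where "q' k a \<noteq> q k a" using \<open>q' \<noteq> q\<close> by (meson ext)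
    hence "c (k, a) \<noteq> 0" using lam[of k] by (simp add: c_def)
    thus ?thesis ..
  qed
  ultimately obtain c' where c': "circulation_on {e. c e \<noteq> 0} c'"
    and ln_neq: "(\<Sum>e\<in>UNIV. c' e * ln (g e)) \<noteq> 0"
    using gen unfolding generic_gains_def circulation_on_def by blast
  have "g (k, a) = lam k * (load q a / b a)" if "c' (k, a) \<noteq> 0" for k a
  proof -
    have "q k a \<noteq> q' k a" using c' that by (auto simp: circulation_on_def c_def)
    hence "b a * g (k, a) / load q a = lam k" using vel by (simp add: vel_eq)
    thus ?thesis using load_red_pos[OF q, of a] b_pos[of a] by (simp add: field_simps)
  qed
  hence "(\<Sum>e\<in>UNIV. c' e * ln (g e)) = 0"
    using c' lam load_red_pos[OF q] b_pos
    by (intro circulation_sum_ln_factorized[of c' g lam "\<lambda>a. load q a / b a"])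
       (auto simp: circulation_on_def)
  thus False using ln_neq by contradiction
qed

lemma ex_unique_nash_potential_maximizer:
  assumes "generic_gains g" "\<And>k. S k \<noteq> {}"
  shows "\<exists>q. nash S q \<and> (\<forall>q'. nash S q' \<longrightarrow> q' = q)
           \<and> (\<forall>x\<in>red_strat_space P S. x \<noteq> q \<longrightarrow> potential x < potential q)"
proof -
  obtain q where q: "q \<in> red_strat_space P S" and max: "\<forall>x\<in>red_strat_space P S. potential x \<le> potential q"
    using ex_potential_maximizer[of S] assms(2) by blast
  have nash: "nash S q" by (rule potential_maximizer_nash[OF q max])
  have "potential x < potential q" if "x \<in> red_strat_space P S" "x \<noteq> q" for x
  proof -
    have "potential x \<noteq> potential q"
    proof
      assume "potential x = potential q"
      hence "nash S x" using that(1) max by (intro potential_maximizer_nash) auto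
      thus False using nash_unique[OF assms(1) nash] that(2) by blast
    qed
    moreover have "potential x \<le> potential q" using max that(1) by blast
    ultimately show ?thesis by simp
  qed
  thus ?thesis using nash nash_unique[OF assms(1) nash] by blast
qed

end

section \<open>Scalar differential inequalities\<close>

lemma DERIV_within_nonpos_imp_decreasing:
  fixes F F' :: "real \<Rightarrow> real"
  assumes deriv: "\<And>t. t \<in> {0..T} \<Longrightarrow> (F has_real_derivative F' t) (at t within {0..})"
    and nonpos: "\<And>t. t \<in> {0..T} \<Longrightarrow> F' t \<le> 0" and "0 \<le> s" "s \<le> t" "t \<le> T"
  shows "F t \<le> F s"
proof (rule DERIV_nonpos_imp_decreasing_open[OF \<open>s \<le> t\<close>])
  fix x assume x: "s < x" "x < t"
  have "at x within {0..} = at x"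
    by (rule at_within_interior) (use x \<open>0 \<le> s\<close> in simp)
  thus "\<exists>y. DERIV F x :> y \<and> y \<le> 0" using deriv[of x] nonpos[of x] x assms(3-5) by auto
next
  have "continuous_on {0..T} F"
    by (rule DERIV_continuous_on[where D = F'], rule DERIV_subset[OF deriv]) auto
  thus "continuous_on {s..t} F" by (rule continuous_on_subset) (use assms(3-5) in auto)
qed

text \<open>Gronwall: a solution of \<open>x' = x * h\<close> with \<open>\<bar>h\<bar> \<le> M\<close> satisfies
  \<open>x 0\<^sup>2 * exp (-2 M t) \<le> x t\<^sup>2 \<le> x 0\<^sup>2 * exp (2 M t)\<close>.\<close>
lemma linear_ode_eq_0_iff:
  fixes x h :: "real \<Rightarrow> real"
  assumes deriv: "\<And>t. t \<in> {0..T} \<Longrightarrow> (x has_real_derivative x t * h t) (at t within {0..})"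
    and cont: "continuous_on {0..T} h" and t: "t \<in> {0..T}"
  shows "x t = 0 \<longleftrightarrow> x 0 = 0"
proof -
  obtain M where M: "\<forall>s\<in>{0..T}. \<bar>h s\<bar> \<le> M"
    using compact_imp_bounded[OF compact_continuous_image[OF cont compact_Icc]]
    unfolding bounded_real by (auto simp del: atLeastAtMost_iff)
  have "(x t)\<^sup>2 * exp (- 2 * M * t) \<le> (x 0)\<^sup>2 * exp (- 2 * M * 0)"
  proof (rule DERIV_within_nonpos_imp_decreasing[where T = T and F = "\<lambda>s. (x s)\<^sup>2 * exp (- 2 * M * s)"])
    fix s assume s: "s \<in> {0..T}"
    show "((\<lambda>s. (x s)\<^sup>2 * exp (- 2 * M * s)) has_real_derivative
            (h s - M) * (2 * (x s)\<^sup>2 * exp (- 2 * M * s))) (at s within {0..})"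
      by (auto intro!: derivative_eq_intros deriv[OF s] simp: algebra_simps power2_eq_square)
    show "(h s - M) * (2 * (x s)\<^sup>2 * exp (- 2 * M * s)) \<le> 0"
      by (rule mult_nonpos_nonneg) (use M s in \<open>auto simp: abs_le_iff\<close>)
  qed (use t in auto)
  moreover have "- ((x t)\<^sup>2 * exp (2 * M * t)) \<le> - ((x 0)\<^sup>2 * exp (2 * M * 0))"
  proof (rule DERIV_within_nonpos_imp_decreasing[where T = T and F = "\<lambda>s. - ((x s)\<^sup>2 * exp (2 * M * s))"])
    fix s assume s: "s \<in> {0..T}"
    show "((\<lambda>s. - ((x s)\<^sup>2 * exp (2 * M * s))) has_real_derivative
            - (h s + M) * (2 * (x s)\<^sup>2 * exp (2 * M * s))) (at s within {0..})"
      by (auto intro!: derivative_eq_intros deriv[OF s] simp: algebra_simps power2_eq_square)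
    show "- (h s + M) * (2 * (x s)\<^sup>2 * exp (2 * M * s)) \<le> 0"
      by (rule mult_nonpos_nonneg) (use M s in \<open>auto simp: abs_le_iff\<close>)
  qed (use t in auto)
  ultimately show ?thesis
    by (smt (verit) exp_gt_zero mult_pos_pos power2_eq_square zero_less_power2 mult_eq_0_iff)
qed

lemma linear_ode_pos:
  fixes x h :: "real \<Rightarrow> real"
  assumes deriv: "\<And>t. t \<in> {0..T} \<Longrightarrow> (x has_real_derivative x t * h t) (at t within {0..})"
    and cont: "continuous_on {0..T} h" and t: "t \<in> {0..T}" and "x 0 > 0"
  shows "x t > 0"
proof (rule ccontr)
  assume "\<not> x t > 0"
  have "continuous_on {0..t} x"
    by (rule DERIV_continuous_on[where D = "\<lambda>s. x s * h s"], rule DERIV_subset[OF deriv])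
       (use t in auto)
  then obtain r where "0 \<le> r" "r \<le> t" "x r = 0"
    using IVT2'[of x t 0 0] \<open>\<not> x t > 0\<close> \<open>x 0 > 0\<close> t by force
  thus False
    using linear_ode_eq_0_iff[OF deriv cont, of r] \<open>x 0 > 0\<close> t by auto
qed

section \<open>Replicator trajectories\<close>

locale replicator_trajectory = mac_game P b sigma2 g
  for P :: "'k::finite \<Rightarrow> real" and b sigma2 :: "'n::finite \<Rightarrow> real" and g +
  fixes p :: "real \<Rightarrow> 'k \<Rightarrow> 'n \<Rightarrow> real"
  assumes solution: "replicator_solution P b sigma2 g p" and init: "p 0 \<in> strat_space P"
begin

abbreviation rate :: "real \<Rightarrow> 'k \<Rightarrow> 'n \<Rightarrow> real" where
  "rate t k a \<equiv> vel b sigma2 g (p t) k a - avg_vel P b sigma2 g (p t) k"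

abbreviation supp0 :: "'k \<Rightarrow> 'n set" where
  "supp0 \<equiv> \<lambda>k. supp_vec (p 0 k)"

lemma init_nonneg: "p 0 k a \<ge> 0" and init_sum: "sum (p 0 k) UNIV = P k"
  using init by (simp_all add: strat_space_def)

lemma supp0_nonempty: "supp0 k \<noteq> {}"
proof
  assume "supp0 k = {}"
  hence "p 0 k a = 0" for a using init_nonneg[of k a] by (auto simp: supp_vec_def less_le)
  thus False using init_sum[of k] P_pos[of k] by simp
qed

lemma p_deriv: "t \<ge> 0 \<Longrightarrow> ((\<lambda>s. p s k a) has_real_derivative p t k a * rate t k a) (at t within {0..})"
  using solution unfolding replicator_solution_def by simp

lemma continuous_on_p: "continuous_on {0..} (\<lambda>t. p t k a)"
  by (rule DERIV_continuous_on[OF p_deriv]) simp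

lemma continuous_on_load: "continuous_on {0..} (\<lambda>t. load (p t) a)"
  unfolding load_def by (intro continuous_intros continuous_on_p)

lemma sum_mult_rate:
  "(\<Sum>a\<in>UNIV. y a * rate t k a)
     = (\<Sum>a\<in>UNIV. y a * vel b sigma2 g (p t) k a) - sum y UNIV * avg_vel P b sigma2 g (p t) k"
  by (simp add: right_diff_distrib sum_subtractf sum_distrib_right)

lemma
  assumes "U \<subseteq> {0..}" and load: "\<And>s c. s \<in> U \<Longrightarrow> load (p s) c > 0"
  shows continuous_on_vel: "continuous_on U (\<lambda>s. vel b sigma2 g (p s) k a)"
    and continuous_on_avg_vel: "continuous_on U (\<lambda>s. avg_vel P b sigma2 g (p s) k)"
proof -
  have p: "continuous_on U (\<lambda>s. p s l c)" for l c
    by (rule continuous_on_subset[OF continuous_on_p assms(1)])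
  have vel: "continuous_on U (\<lambda>s. vel b sigma2 g (p s) k c)" for c
    unfolding vel_eq
  proof (intro continuous_intros continuous_on_subset[OF continuous_on_load assms(1)] ballI)
    show "load (p s) c \<noteq> 0" if "s \<in> U" for s using load[OF that, of c] by simp
  qed
  show "continuous_on U (\<lambda>s. vel b sigma2 g (p s) k a)" by (rule vel)
  show "continuous_on U (\<lambda>s. avg_vel P b sigma2 g (p s) k)"
    unfolding avg_vel_def using P_pos[of k] by (intro continuous_intros p vel) simp
qed

text \<open>Supports and total powers are preserved as long as the loads stay positive, since then the
  rates are continuous and each \<open>p k a\<close>, as well as \<open>sum (p k) UNIV - P k\<close>, solves a linear
  equation \<open>x' = x * h\<close>.\<close>
lemma
  assumes load: "\<And>s c. s \<in> {0..T} \<Longrightarrow> load (p s) c > 0" and t: "t \<in> {0..T}"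
  shows p_eq_0_iff_upto: "p t k a = 0 \<longleftrightarrow> p 0 k a = 0"
    and p_pos_upto: "p 0 k a > 0 \<Longrightarrow> p t k a > 0"
    and sum_p_upto: "sum (p t k) UNIV = P k"
proof -
  have deriv: "\<And>s. s \<in> {0..T} \<Longrightarrow> ((\<lambda>s. p s k a) has_real_derivative p s k a * rate s k a) (at s within {0..})"
    by (rule p_deriv) simp
  have cont: "continuous_on {0..T} (\<lambda>s. rate s k a)"
    using load by (intro continuous_intros continuous_on_vel continuous_on_avg_vel) auto
  show "p t k a = 0 \<longleftrightarrow> p 0 k a = 0" by (rule linear_ode_eq_0_iff[OF deriv cont t])
  show "p 0 k a > 0 \<Longrightarrow> p t k a > 0" by (rule linear_ode_pos[OF deriv cont t])
  have "((\<lambda>s. sum (p s k) UNIV - P k) has_real_derivative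
           (sum (p s k) UNIV - P k) * - avg_vel P b sigma2 g (p s) k) (at s within {0..})"
    if "s \<in> {0..T}" for s
  proof -
    have "((\<lambda>s. sum (p s k) UNIV - P k) has_real_derivative (\<Sum>c\<in>UNIV. p s k c * rate s k c))
            (at s within {0..})"
      using that by (auto intro!: derivative_eq_intros p_deriv)
    moreover have "(\<Sum>c\<in>UNIV. p s k c * rate s k c)
        = (sum (p s k) UNIV - P k) * - avg_vel P b sigma2 g (p s) k"
      unfolding sum_mult_rate sum_mult_vel_eq_avg_vel by (simp add: algebra_simps)
    ultimately show ?thesis by simp
  qed
  moreover have "continuous_on {0..T} (\<lambda>s. - avg_vel P b sigma2 g (p s) k)"
    using load by (intro continuous_intros continuous_on_avg_vel) auto
  ultimately show "sum (p t k) UNIV = P k"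
    using linear_ode_eq_0_iff[where x = "\<lambda>s. sum (p s k) UNIV - P k"
        and h = "\<lambda>s. - avg_vel P b sigma2 g (p s) k", OF _ _ t] init_sum
    by simp
qed

lemma p_nonneg_upto:
  assumes "\<And>s c. s \<in> {0..T} \<Longrightarrow> load (p s) c > 0" "t \<in> {0..T}"
  shows "p t k a \<ge> 0"
proof (cases "p 0 k a = 0")
  case True
  thus ?thesis using p_eq_0_iff_upto[OF assms, of k a] by simp
next
  case False
  thus ?thesis using p_pos_upto[OF assms, of k a] init_nonneg[of k a] by simp
qed

text \<open>At the first time \<open>Inf B\<close> at which a load would vanish, all powers are still nonnegative
  before it, so by continuity every load at \<open>Inf B\<close> is at least the noise.\<close>
lemma load_p_pos:
  assumes t: "t \<ge> 0" shows "load (p t) c > 0"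
proof (rule ccontr)
  assume neg: "\<not> ?thesis"
  define B where "B = (\<Union>c. {s \<in> {0..t}. load (p s) c \<le> 0})"
  have "closed B" unfolding B_def
    by (intro closed_UN ballI continuous_on_closed_Collect_le continuous_on_subset[OF continuous_on_load])
       auto
  moreover have "t \<in> B" using t neg by (auto simp: B_def not_less)
  moreover have bdd: "bdd_below B" unfolding B_def by (auto intro: bdd_belowI[of _ 0])
  ultimately have s0: "Inf B \<in> B" using closed_contains_Inf by blast
  have below: "load (p r) c > 0" if r: "r \<in> {0..<Inf B}" for r c
  proof (rule ccontr)
    assume "\<not> load (p r) c > 0"
    moreover have "Inf B \<le> t" using s0 by (auto simp: B_def)
    ultimately have "r \<in> B" using r by (auto simp: B_def not_less)
    thus False using cInf_lower[OF _ bdd, of r] r by auto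
  qed
  have ge: "load (p (Inf B)) c \<ge> sigma2 c" for c
  proof (cases "Inf B = 0")
    case True thus ?thesis using init_nonneg load_ge_sigma2 by simp
  next
    case False
    hence "Inf B > 0" using s0 by (simp add: B_def)
    show ?thesis
    proof (rule continuous_ge_on_closure[of "{0..<Inf B}" "\<lambda>r. load (p r) c"])
      show "continuous_on (closure {0..<Inf B}) (\<lambda>r. load (p r) c)"
        using \<open>Inf B > 0\<close> by (auto intro: continuous_on_subset[OF continuous_on_load])
      show "Inf B \<in> closure {0..<Inf B}" using \<open>Inf B > 0\<close> by simp
      show "load (p r) c \<ge> sigma2 c" if "r \<in> {0..<Inf B}" for r
        using that below by (intro load_ge_sigma2 p_nonneg_upto[of r]) auto
    qed
  qed
  obtain c where "load (p (Inf B)) c \<le> 0" using s0 by (auto simp: B_def)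
  thus False using ge[of c] sigma2_pos[of c] by simp
qed

lemma
  assumes "t \<ge> 0"
  shows p_eq_0_iff: "p t k a = 0 \<longleftrightarrow> p 0 k a = 0"
    and p_nonneg: "p t k a \<ge> 0"
    and sum_p: "sum (p t k) UNIV = P k"
proof -
  have load: "\<And>s c. s \<in> {0..t} \<Longrightarrow> load (p s) c > 0" using load_p_pos by simp
  have t: "t \<in> {0..t}" using assms by simp
  show "p t k a = 0 \<longleftrightarrow> p 0 k a = 0" by (rule p_eq_0_iff_upto[OF load t])
  show "p t k a \<ge> 0" by (rule p_nonneg_upto[OF load t])
  show "sum (p t k) UNIV = P k" by (rule sum_p_upto[OF load t])
qed

lemma p_pos: "t \<ge> 0 \<Longrightarrow> a \<in> supp0 k \<Longrightarrow> p t k a > 0"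
  using p_nonneg[of t k a] p_eq_0_iff[of t k a] by (simp add: supp_vec_def less_le)

lemma p_pos_if_red_pos:
  assumes "q \<in> red_strat_space P supp0" "t \<ge> 0" "q k a \<noteq> 0"
  shows "p t k a > 0"
  using assms red_strat_space_nonneg[OF assms(1), of k a] red_strat_space_support[OF assms(1)]
  by (intro p_pos) (simp_all add: less_le)

lemma p_in_red_strat_space:
  assumes t: "t \<ge> 0" shows "p t \<in> red_strat_space P supp0"
proof -
  have outside: "p t k a = 0" if "a \<notin> supp0 k" for k a
    using that p_eq_0_iff[OF t, of k a] init_nonneg[of k a] by (simp add: supp_vec_def)
  have "sum (p t k) (supp0 k) = sum (p t k) UNIV" for k
    using outside by (intro sum.mono_neutral_left) auto
  thus ?thesis using outside p_nonneg[OF t] sum_p[OF t] by (simp add: red_strat_space_def)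
qed

lemma load_p_deriv:
  assumes "t \<ge> 0"
  shows "((\<lambda>s. load (p s) a) has_real_derivative (\<Sum>l\<in>UNIV. g (l, a) * (p t l a * rate t l a)))
           (at t within {0..})"
  unfolding load_def
  using DERIV_add[OF DERIV_const DERIV_sum[OF DERIV_cmult[OF p_deriv[OF assms]]]] by simp

lemma potential_deriv:
  assumes t: "t \<ge> 0"
  shows "((\<lambda>s. potential (p s)) has_real_derivative (\<Sum>k\<in>UNIV. \<Sum>a\<in>UNIV. p t k a * (rate t k a)\<^sup>2))
           (at t within {0..})"
proof -
  have "((\<lambda>s. potential (p s)) has_real_derivative
           (\<Sum>a\<in>UNIV. b a * (1 / load (p t) a * (\<Sum>l\<in>UNIV. g (l, a) * (p t l a * rate t l a)))))
           (at t within {0..})"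
    unfolding potential_def
    by (intro DERIV_sum DERIV_cmult DERIV_chain2[OF DERIV_ln_divide[OF load_p_pos[OF t]] load_p_deriv[OF t]])
  also have "(\<Sum>a\<in>UNIV. b a * (1 / load (p t) a * (\<Sum>l\<in>UNIV. g (l, a) * (p t l a * rate t l a))))
      = (\<Sum>k\<in>UNIV. \<Sum>a\<in>UNIV. p t k a * rate t k a * vel b sigma2 g (p t) k a)"
    by (subst sum.swap) (simp add: sum_distrib_left vel_eq algebra_simps)
  also have "\<dots> = (\<Sum>k\<in>UNIV. \<Sum>a\<in>UNIV. p t k a * (rate t k a)\<^sup>2)"
  proof (rule sum.cong[OF refl])
    fix k
    let ?avg = "avg_vel P b sigma2 g (p t) k"
    have "(\<Sum>a\<in>UNIV. p t k a * rate t k a * vel b sigma2 g (p t) k a)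
        = (\<Sum>a\<in>UNIV. p t k a * (rate t k a)\<^sup>2 + ?avg * (p t k a * rate t k a))"
      by (intro sum.cong) (simp_all add: power2_eq_square algebra_simps)
    also have "\<dots> = (\<Sum>a\<in>UNIV. p t k a * (rate t k a)\<^sup>2) + ?avg * (\<Sum>a\<in>UNIV. p t k a * rate t k a)"
      by (simp only: sum.distrib sum_distrib_left)
    also have "(\<Sum>a\<in>UNIV. p t k a * rate t k a) = 0"
      by (simp add: sum_mult_rate sum_mult_vel_eq_avg_vel sum_p[OF t])
    finally show "(\<Sum>a\<in>UNIV. p t k a * rate t k a * vel b sigma2 g (p t) k a)
        = (\<Sum>a\<in>UNIV. p t k a * (rate t k a)\<^sup>2)" by simp
  qed
  finally show ?thesis .
qed

lemma potential_mono:
  assumes "0 \<le> s" "s \<le> t" shows "potential (p s) \<le> potential (p t)"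
proof -
  have "- potential (p t) \<le> - potential (p s)"
  proof (rule DERIV_within_nonpos_imp_decreasing[where F = "\<lambda>s. - potential (p s)" and T = t])
    fix r :: real assume "r \<in> {0..t}"
    thus "((\<lambda>s. - potential (p s)) has_real_derivative
            - (\<Sum>k\<in>UNIV. \<Sum>a\<in>UNIV. p r k a * (rate r k a)\<^sup>2)) (at r within {0..})"
      by (intro DERIV_minus potential_deriv) simp
    show "- (\<Sum>k\<in>UNIV. \<Sum>a\<in>UNIV. p r k a * (rate r k a)\<^sup>2) \<le> 0"
      using \<open>r \<in> {0..t}\<close> by (simp add: sum_nonneg p_nonneg)
  qed (use assms in auto)
  thus ?thesis by simp
qed

text \<open>Up to a constant, \<open>log_score q t\<close> is minus the Kullback-Leibler divergence of \<open>p t\<close>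
  from \<open>q\<close>.\<close>
definition log_score :: "('k \<Rightarrow> 'n \<Rightarrow> real) \<Rightarrow> real \<Rightarrow> real" where
  "log_score q t = (\<Sum>k\<in>UNIV. \<Sum>a\<in>UNIV. q k a * ln (p t k a))"

lemma log_score_deriv:
  assumes q: "q \<in> red_strat_space P supp0" and t: "t \<ge> 0"
  shows "(log_score q has_real_derivative (\<Sum>k\<in>UNIV. \<Sum>a\<in>UNIV. q k a * rate t k a)) (at t within {0..})"
  unfolding log_score_def
proof (intro DERIV_sum)
  fix k a
  show "((\<lambda>s. q k a * ln (p s k a)) has_real_derivative q k a * rate t k a) (at t within {0..})"
  proof (cases "q k a = 0")
    case False
    hence "p t k a > 0" by (rule p_pos_if_red_pos[OF q t])
    thus ?thesis by (auto intro!: derivative_eq_intros p_deriv[OF t])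
  qed simp
qed

lemma log_score_deriv_ge:
  assumes q: "q \<in> red_strat_space P supp0" and t: "t \<ge> 0"
  shows "potential q - potential (p t) \<le> (\<Sum>k\<in>UNIV. \<Sum>a\<in>UNIV. q k a * rate t k a)"
proof -
  have "potential q - potential (p t) = (\<Sum>a\<in>UNIV. b a * (ln (load q a) - ln (load (p t) a)))"
    unfolding potential_def by (simp add: sum_subtractf right_diff_distrib)
  also have "\<dots> \<le> (\<Sum>a\<in>UNIV. b a * ((load q a - load (p t) a) / load (p t) a))"
  proof (rule sum_mono)
    fix a
    show "b a * (ln (load q a) - ln (load (p t) a)) \<le> b a * ((load q a - load (p t) a) / load (p t) a)"
      by (rule mult_left_mono[OF ln_diff_le[OF load_red_pos[OF q, of a] load_p_pos[OF t, of a]]])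
         (use b_pos[of a] in simp)
  qed
  also have "\<dots> = (\<Sum>k\<in>UNIV. \<Sum>a\<in>UNIV. q k a * vel b sigma2 g (p t) k a)
                 - (\<Sum>k\<in>UNIV. \<Sum>a\<in>UNIV. p t k a * vel b sigma2 g (p t) k a)"
    unfolding sum_mult_vel_eq_load sum_subtractf[symmetric]
    by (intro sum.cong refl)
       (simp add: field_simps load_p_pos[OF t, THEN less_imp_neq, symmetric])
  also have "\<dots> = (\<Sum>k\<in>UNIV. \<Sum>a\<in>UNIV. q k a * rate t k a)"
    by (simp add: sum_mult_rate sum_mult_vel_eq_avg_vel red_strat_space_sum[OF q] sum_p[OF t]
                  sum_subtractf)
  finally show ?thesis .
qed

lemma log_score_le:
  assumes q: "q \<in> red_strat_space P supp0" and t: "t \<ge> 0"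
  shows "log_score q t \<le> (\<Sum>k\<in>UNIV. \<Sum>a\<in>UNIV. q k a * ln (P k))"
  unfolding log_score_def
proof (intro sum_mono)
  fix k a
  show "q k a * ln (p t k a) \<le> q k a * ln (P k)"
  proof (cases "q k a = 0")
    case False
    hence "p t k a > 0" by (rule p_pos_if_red_pos[OF q t])
    moreover have "p t k a \<le> P k"
      using red_strat_space_le[OF p_in_red_strat_space[OF t]] .
    ultimately show ?thesis by (simp add: mult_left_mono red_strat_space_nonneg[OF q])
  qed simp
qed

lemma potential_exceeds:
  assumes q: "q \<in> red_strat_space P supp0" and m: "m < potential q"
  obtains t where "t \<ge> 0" "potential (p t) > m"
proof (rule ccontr)
  assume "\<not> thesis"
  hence le: "\<And>t. t \<ge> 0 \<Longrightarrow> potential (p t) \<le> m" using that by force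
  define \<delta> where "\<delta> = potential q - m"
  define C where "C = (\<Sum>k\<in>UNIV. \<Sum>a\<in>UNIV. q k a * ln (P k))"
  define t where "t = max 0 ((C - log_score q 0 + 1) / \<delta>)"
  have "\<delta> > 0" "t \<ge> 0" using m by (simp_all add: \<delta>_def t_def)
  have "\<delta> * t - log_score q t \<le> \<delta> * 0 - log_score q 0"
  proof (rule DERIV_within_nonpos_imp_decreasing[where T = t and F = "\<lambda>s. \<delta> * s - log_score q s"])
    fix s assume s: "s \<in> {0..t}"
    show "((\<lambda>s. \<delta> * s - log_score q s) has_real_derivative
            \<delta> - (\<Sum>k\<in>UNIV. \<Sum>a\<in>UNIV. q k a * rate s k a)) (at s within {0..})"
      using s by (auto intro!: derivative_eq_intros log_score_deriv[OF q])
    show "\<delta> - (\<Sum>k\<in>UNIV. \<Sum>a\<in>UNIV. q k a * rate s k a) \<le> 0"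
      using log_score_deriv_ge[OF q, of s] le[of s] s by (simp add: \<delta>_def)
  qed (use \<open>t \<ge> 0\<close> in auto)
  moreover have "\<delta> * t \<ge> C - log_score q 0 + 1"
  proof -
    have "t \<ge> (C - log_score q 0 + 1) / \<delta>" by (simp add: t_def)
    thus ?thesis using \<open>\<delta> > 0\<close> by (simp add: field_simps)
  qed
  moreover have "log_score q t \<le> C" unfolding C_def by (rule log_score_le[OF q \<open>t \<ge> 0\<close>])
  ultimately show False by linarith
qed

text \<open>Outside any neighbourhood of \<open>q\<close> the potential on the compact strategy space stays below
  some \<open>m < potential q\<close>, which the nondecreasing potential along the trajectory eventually
  exceeds.\<close>
lemma tendsto_strict_potential_maximizer:
  assumes q: "q \<in> red_strat_space P supp0"
    and max: "\<And>x. x \<in> red_strat_space P supp0 \<Longrightarrow> x \<noteq> q \<Longrightarrow> potential x < potential q"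
  shows "((\<lambda>t. p t k a) \<longlongrightarrow> q k a) at_top"
proof (rule tendstoI)
  fix \<epsilon> :: real assume "\<epsilon> > 0"
  define K where "K = red_strat_space P supp0 \<inter> {x. \<epsilon> \<le> \<bar>x k a - q k a\<bar>}"
  have near: "dist (p t k a) (q k a) < \<epsilon>" if "t \<ge> 0" "p t \<notin> K" for t
    using p_in_red_strat_space[OF that(1)] that(2) by (auto simp: K_def dist_real_def)
  show "\<forall>\<^sub>F t in at_top. dist (p t k a) (q k a) < \<epsilon>"
  proof (cases "K = {}")
    case True
    thus ?thesis using near by (auto simp: eventually_at_top_linorder)
  next
    case False
    have "compact K" unfolding K_def
      by (intro compact_Int_closed compact_red_strat_space closed_Collect_le continuous_intros)
    moreover have "continuous_on K potential"
      by (rule continuous_on_subset[OF continuous_on_potential]) (auto simp: K_def)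
    ultimately obtain x where x: "x \<in> K" "\<forall>y\<in>K. potential y \<le> potential x"
      using continuous_attains_sup[OF _ False] by blast
    have "x \<noteq> q" using x(1) \<open>\<epsilon> > 0\<close> by (auto simp: K_def)
    hence "potential x < potential q" using x(1) max by (simp add: K_def)
    then obtain t1 where "t1 \<ge> 0" "potential (p t1) > potential x"
      using potential_exceeds[OF q] by blast
    hence "p t \<notin> K" if "t \<ge> t1" for t
      using potential_mono[of t1 t] that x(2) by force
    thus ?thesis unfolding eventually_at_top_linorder
      using near \<open>t1 \<ge> 0\<close> by (intro exI[of _ t1]) auto
  qed
qed

lemma converges_to_unique_nash:
  assumes "generic_gains g"
  shows "\<exists>q. nash supp0 q \<and> (\<forall>q'. nash supp0 q' \<longrightarrow> q' = q)
           \<and> (\<forall>k a. ((\<lambda>t. p t k a) \<longlongrightarrow> q k a) at_top)"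
proof -
  obtain q where nash: "nash supp0 q" and unique: "\<forall>q'. nash supp0 q' \<longrightarrow> q' = q"
    and strict: "\<forall>x\<in>red_strat_space P supp0. x \<noteq> q \<longrightarrow> potential x < potential q"
    using ex_unique_nash_potential_maximizer[of supp0, OF assms supp0_nonempty] by blast
  have "q \<in> red_strat_space P supp0" using nash by (simp add: is_nash_def)
  hence "((\<lambda>t. p t k a) \<longlongrightarrow> q k a) at_top" for k a
    by (rule tendsto_strict_potential_maximizer) (use strict in blast)
  thus ?thesis using nash unique by blast
qed

end
theorem proposition1:
  fixes P :: "'k::finite \<Rightarrow> real" and b sigma2 :: "'n::finite \<Rightarrow> real"
    and mu :: "real measure"
  assumes P_pos: "\<forall>k. P k > 0"
    and b_pos: "\<forall>a. b a > 0"
    and sigma_pos: "\<forall>a. sigma2 a > 0"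
    and prob: "prob_space mu"
    and borel: "sets mu = sets borel"
    and nonatomic: "\<forall>x. emeasure mu {x} = 0"
    and positive: "AE x in mu. x > 0"
  shows "AE g in PiM UNIV (\<lambda>_::'k \<times> 'n. mu).
           \<forall>p0 \<in> strat_space P. \<forall>p :: real \<Rightarrow> 'k \<Rightarrow> 'n \<Rightarrow> real.
              p 0 = p0 \<and> replicator_solution P b sigma2 g p \<longrightarrow>
              (\<exists>q. is_nash (red_strat_space P (\<lambda>k. supp_vec (p0 k)))
                            (red_payoff b sigma2 g (\<lambda>k. supp_vec (p0 k))) q
                 \<and> (\<forall>q'. is_nash (red_strat_space P (\<lambda>k. supp_vec (p0 k)))
                            (red_payoff b sigma2 g (\<lambda>k. supp_vec (p0 k))) q' \<longrightarrow> q' = q)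
                 \<and> (\<forall>k a. ((\<lambda>t. p t k a) \<longlongrightarrow> q k a) at_top))"
proof -
  have "AE g in PiM UNIV (\<lambda>_::'k \<times> 'n. mu). (\<forall>e. g e > 0) \<and> generic_gains g"
    using AE_PiM_all_pos[OF prob positive] AE_generic_gains[OF prob borel nonatomic positive]
    by eventually_elim simp
  thus ?thesis
  proof eventually_elim
    case (elim g)
    show ?case
    proof (intro ballI allI impI)
      fix p0 and p :: "real \<Rightarrow> 'k \<Rightarrow> 'n \<Rightarrow> real"
      assume "p0 \<in> strat_space P" and p: "p 0 = p0 \<and> replicator_solution P b sigma2 g p"
      moreover have "\<And>e. g e > 0" using elim by blast
      ultimately interpret replicator_trajectory P b sigma2 g p
        using P_pos b_pos sigma_pos by unfold_locales simp_all
      have "p0 = p 0" using p by simp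
      thus "\<exists>q. nash (\<lambda>k. supp_vec (p0 k)) q
          \<and> (\<forall>q'. nash (\<lambda>k. supp_vec (p0 k)) q' \<longrightarrow> q' = q)
          \<and> (\<forall>k a. ((\<lambda>t. p t k a) \<longlongrightarrow> q k a) at_top)"
        using converges_to_unique_nash elim by (simp only:)
    qed
  qed
qed

end
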